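(* Consider the two-user two-hop MAC with $n$ relays as in the context. Then (i) $\bigcup_{\mathbf B\text{ feasible},\,\mathbf B\mathbf h_1\neq 0}\mathcal R^{out}_1(\mathbf B)=\bigcup_{\theta\in[\alpha,\beta]}\mathcal R(\theta)$, i.e. it suffices to take $\theta\in[\alpha,\beta]$; and (ii) if $\arccos(\hat{\mathbf h}_{01}^T\hat{\mathbf h}_{02})\le\pi/4$, then $\bigcup_{\theta\in[\alpha,\beta]}\mathcal R(\theta)$ is a convex set (so it equals its convex hull).
   Context: Two sources $S_1,S_2$ with Gaussian inputs of powers $P_{S_1},P_{S_2}>0$, $n$ relays, one destination. Relay $k$ receives $y_k=h_{S_1,k}x_{S_1}+h_{S_2,k}x_{S_2}+z_k$ and sends $\beta_k y_k$; the destination receives $y_D=\mathbf h_1^T\mathbf B\mathbf h_{01}x_{S_1}+\mathbf h_1^T\mathbf B\mathbf h_{02}x_{S_2}+\mathbf h_1^T\mathbf B\mathbf z_1+z_D$, where $\mathbf h_{0i}=(h_{S_i,k})_k\in\mathbb R^n$, $\mathbf h_1=(h_{k,D})_k\in\mathbb R^n$ have positive entries, $\mathbf B=\mathrm{diag}(\beta_1,\dots,\beta_n)$ with real gains, and noises are i.i.d. $\mathcal N(0,1)$. $\mathbf B$ is feasible if $|\beta_k|\le\beta_k^{Up}:=\sqrt{P_k^{Up}/(1+h_{S_1,k}^2P_{S_1}+h_{S_2,k}^2P_{S_2})}$ for all $k$. Let $\mathcal C(x)=\frac12\log_2(1+x)$ and $\mathbf A=P_{S_1}\mathbf h_{01}\mathbf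 h_{01}^T+P_{S_2}\mathbf h_{02}\mathbf h_{02}^T$. For $\mathbf B$ with $\mathbf B\mathbf h_1\ne0$, $\mathcal R^{out}_1(\mathbf B)$ is the set of $(R_1,R_2)\ge0$ with $R_1\le\mathcal C\big((\mathbf h_1^T\mathbf B\mathbf h_{01})^2P_{S_1}/\mathbf h_1^T\mathbf B^2\mathbf h_1\big)$, $R_2\le\mathcal C\big((\mathbf h_1^T\mathbf B\mathbf h_{02})^2P_{S_2}/\mathbf h_1^T\mathbf B^2\mathbf h_1\big)$, $R_1+R_2\le\mathcal C\big(\mathbf h_1^T\mathbf B\mathbf A\mathbf B\mathbf h_1/\mathbf h_1^T\mathbf B^2\mathbf h_1\big)$. Let $\hat{\mathbf h}_{0i}=\mathbf h_{0i}/\|\mathbf h_{0i}\|$ and $P_i=\|\mathbf h_{0i}\|^2P_{S_i}$. Fix orthonormal $\mathbf u_1,\mathbf u_2\in\mathbb R^n$ and angles $0\le\alpha\le\beta\le\pi/2$ with $\hat{\mathbf h}_{01}=\cos\alpha\,\mathbf u_1+\sin\alpha\,\mathbf u_2$, $\hat{\mathbf h}_{02}=\cos\beta\,\mathbf u_1+\sin\beta\,\mathbf u_2$. For $\theta\in\mathbb R$ let $\phi_1(\theta)=P_1\cos^2(\theta-\alpha)$, $\phi_2(\theta)=P_2\cos^2(\theta-\beta)$, $\phi=\phi_1+\phi_2$, and $\mathcal R(\theta)=\{(R_1,R_2)\ge0:R_1\le\mathcal C(\phi_1(\theta)),R_2\le\mathcal C(\phi_2(\theta)),R_1+R_2\le\mathcal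 C(\phi(\theta))\}$. *)

theory Defs
  imports "HOL-Analysis.Analysis"
begin

definition Cap :: "real \<Rightarrow> real" where
  "Cap x = (1/2) * log 2 (1 + x)"

definition diagm :: "real ^ 'n \<Rightarrow> real ^ 'n ^ 'n" where
  "diagm b = (\<chi> i j. if i = j then b $ i else 0)"

definition outer :: "real ^ 'n \<Rightarrow> real ^ 'n \<Rightarrow> real ^ 'n ^ 'n" where
  "outer x y = (\<chi> i j. x $ i * y $ j)"

definition betaUp :: "real \<Rightarrow> real \<Rightarrow> real ^ 'n \<Rightarrow> real ^ 'n \<Rightarrow> real ^ 'n \<Rightarrow> 'n \<Rightarrow> real" where
  "betaUp PS1 PS2 h01 h02 PUp k =
     sqrt (PUp $ k / (1 + (h01 $ k)\<^sup>2 * PS1 + (h02 $ k)\<^sup>2 * PS2))"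

definition feasible :: "real \<Rightarrow> real \<Rightarrow> real ^ 'n \<Rightarrow> real ^ 'n \<Rightarrow> real ^ 'n \<Rightarrow> real ^ 'n \<Rightarrow> bool" where
  "feasible PS1 PS2 h01 h02 PUp b \<longleftrightarrow> (\<forall>k. \<bar>b $ k\<bar> \<le> betaUp PS1 PS2 h01 h02 PUp k)"

definition Amat :: "real \<Rightarrow> real \<Rightarrow> real ^ 'n \<Rightarrow> real ^ 'n \<Rightarrow> real ^ 'n ^ 'n" where
  "Amat PS1 PS2 h01 h02 = PS1 *\<^sub>R outer h01 h01 + PS2 *\<^sub>R outer h02 h02"

definition Rout1 :: "real \<Rightarrow> real \<Rightarrow> real ^ 'n \<Rightarrow> real ^ 'n \<Rightarrow> real ^ 'n \<Rightarrow> real ^ 'n \<Rightarrow> (real \<times> real) set" where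
  "Rout1 PS1 PS2 h01 h02 h1 b =
    (let B = diagm b; den = h1 \<bullet> (B *v (B *v h1)) in
     {(R1, R2). 0 \<le> R1 \<and> 0 \<le> R2 \<and>
        R1 \<le> Cap ((h1 \<bullet> (B *v h01))\<^sup>2 * PS1 / den) \<and>
        R2 \<le> Cap ((h1 \<bullet> (B *v h02))\<^sup>2 * PS2 / den) \<and>
        R1 + R2 \<le> Cap ((h1 \<bullet> (B *v (Amat PS1 PS2 h01 h02 *v (B *v h1)))) / den)})"

definition Rtheta :: "real \<Rightarrow> real \<Rightarrow> real \<Rightarrow> real \<Rightarrow> real \<Rightarrow> (real \<times> real) set" where
  "Rtheta P1 P2 \<alpha> \<beta> \<theta> =
    (let \<phi>1 = P1 * (cos (\<theta> - \<alpha>))\<^sup>2; \<phi>2 = P2 * (cos (\<theta> - \<beta>))\<^sup>2 in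
     {(R1, R2). 0 \<le> R1 \<and> 0 \<le> R2 \<and> R1 \<le> Cap \<phi>1 \<and> R2 \<le> Cap \<phi>2 \<and>
        R1 + R2 \<le> Cap (\<phi>1 + \<phi>2)})"

end

theory Submission
  imports Defs
begin

text \<open>Write \<open>w = B h\<^sub>1\<close> for the beam seen by the destination. The three constraints of
  \<open>R\<^sup>o\<^sup>u\<^sup>t\<^sub>1(B)\<close> are those of a MAC pentagon with SNRs \<open>P\<^sub>S\<^sub>i (w \<bullet> h\<^sub>0\<^sub>i)\<^sup>2 / |w|\<^sup>2\<close>, so only the
  direction of \<open>w\<close> matters, and every direction is realised by feasible gains after scaling
  \<open>w\<close> down. If the projection of \<open>w\<close> onto the plane of \<open>u\<^sub>1, u\<^sub>2\<close> has angle \<open>t\<close>, the SNRs are at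
  most \<open>P\<^sub>i cos\<^sup>2 (t - \<alpha>\<^sub>i)\<close>, and replacing \<open>t\<close> by a suitable angle in \<open>[\<alpha>, \<beta>]\<close> increases both
  bounds; this gives (i). For (ii), if \<open>\<beta> - \<alpha> \<le> \<pi>/4\<close> the angles \<open>\<theta> - \<alpha>\<close> and \<open>\<theta> - \<beta>\<close>
  stay in \<open>[-\<pi>/4, \<pi>/4]\<close>, where \<open>cos\<^sup>2\<close> is concave, so by concavity and monotonicity of
  \<open>C\<close> a convex combination of points of \<open>R(\<theta>\<^sub>1)\<close> and \<open>R(\<theta>\<^sub>2)\<close> lies in the region of the
  averaged angle.\<close>

definition mac_region :: "real \<Rightarrow> real \<Rightarrow> (real \<times> real) set" where
  "mac_region p q = {(R1, R2). 0 \<le> R1 \<and> 0 \<le> R2 \<and> R1 \<le> Cap p \<and> R2 \<le> Cap q \<and> R1 + R2 \<le> Cap (p + q)}"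

lemma Rtheta_eq_mac_region:
  "Rtheta P1 P2 \<alpha> \<beta> \<theta> = mac_region (P1 * (cos (\<theta> - \<alpha>))\<^sup>2) (P2 * (cos (\<theta> - \<beta>))\<^sup>2)"
  by (simp add: Rtheta_def mac_region_def Let_def)

lemma Cap_mono: "0 \<le> x \<Longrightarrow> x \<le> y \<Longrightarrow> Cap x \<le> Cap y"
  unfolding Cap_def by simp

lemma concave_on_Cap: "concave_on {0..} Cap"
  unfolding Cap_def by (intro f''_le0_imp_concave derivative_eq_intros | simp)+

lemma mac_region_mono:
  assumes "0 \<le> p" "p \<le> p'" "0 \<le> q" "q \<le> q'"
  shows "mac_region p q \<subseteq> mac_region p' q'"
proof -
  have "Cap p \<le> Cap p'" "Cap q \<le> Cap q'" "Cap (p + q) \<le> Cap (p' + q')"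
    using assms by (auto intro!: Cap_mono)
  then show ?thesis unfolding mac_region_def by auto
qed

lemma convex_combination_le_Cap:
  assumes uv: "0 \<le> u" "0 \<le> v" "u + v = 1"
    and "0 \<le> a1" "0 \<le> a2" "x1 \<le> Cap a1" "x2 \<le> Cap a2" "u * a1 + v * a2 \<le> a"
  shows "u * x1 + v * x2 \<le> Cap a"
proof -
  have "u * x1 + v * x2 \<le> u * Cap a1 + v * Cap a2"
    using assms by (intro add_mono mult_left_mono) auto
  also have "\<dots> \<le> Cap (u * a1 + v * a2)"
    using concave_onD[OF concave_on_Cap, of v a1 a2] assms by (simp add: eq_diff_eq[symmetric])
  also have "\<dots> \<le> Cap a" using assms by (intro Cap_mono) auto
  finally show ?thesis .
qed

lemma mac_region_convex_combination:
  assumes x: "x \<in> mac_region p1 q1" and y: "y \<in> mac_region p2 q2"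
    and nonneg: "0 \<le> p1" "0 \<le> q1" "0 \<le> p2" "0 \<le> q2"
    and uv: "0 \<le> u" "0 \<le> v" "u + v = 1"
    and p: "u * p1 + v * p2 \<le> p" and q: "u * q1 + v * q2 \<le> q"
  shows "u *\<^sub>R x + v *\<^sub>R y \<in> mac_region p q"
proof -
  obtain x1 x2 y1 y2 where xy: "x = (x1, x2)" "y = (y1, y2)" by fastforce
  have "u * (p1 + q1) + v * (p2 + q2) \<le> p + q" using p q by (simp add: algebra_simps)
  then have "u * (x1 + x2) + v * (y1 + y2) \<le> Cap (p + q)"
    using x y nonneg by (intro convex_combination_le_Cap[OF uv]) (auto simp: xy mac_region_def)
  moreover have "u * x1 + v * y1 \<le> Cap p" "u * x2 + v * y2 \<le> Cap q"
    using x y nonneg p q by (intro convex_combination_le_Cap[OF uv]; auto simp: xy mac_region_def)+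
  moreover have "0 \<le> u * x1 + v * y1" "0 \<le> u * x2 + v * y2"
    using x y uv by (auto simp: xy mac_region_def)
  ultimately show ?thesis by (simp add: xy mac_region_def algebra_simps)
qed

lemma concave_on_power2_cos: "concave_on {-(pi/4)..pi/4} (\<lambda>x. (cos x)\<^sup>2)"
proof (rule f''_le0_imp_concave[where f'="\<lambda>x. - 2 * cos x * sin x" and f''="\<lambda>x. - 2 * ((cos x)\<^sup>2 - (sin x)\<^sup>2)"])
  fix x :: real assume x: "x \<in> {-(pi/4)..pi/4}"
  show "((\<lambda>x. (cos x)\<^sup>2) has_real_derivative - 2 * cos x * sin x) (at x)"
    by (rule derivative_eq_intros | simp)+
  show "((\<lambda>x. - 2 * cos x * sin x) has_real_derivative - 2 * ((cos x)\<^sup>2 - (sin x)\<^sup>2)) (at x)"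
    by (rule derivative_eq_intros | simp add: power2_eq_square algebra_simps)+
  have "0 \<le> cos (2 * x)" using x by (intro cos_ge_zero) auto
  then show "- 2 * ((cos x)\<^sup>2 - (sin x)\<^sup>2) \<le> 0" by (simp add: cos_double)
qed auto

lemma power2_cos_le_power2_cos:
  fixes x y :: real
  assumes "0 \<le> x" "x \<le> y" "y \<le> pi - x"
  shows "(cos y)\<^sup>2 \<le> (cos x)\<^sup>2"
proof -
  have "\<bar>cos y\<bar> \<le> cos x"
  proof (cases "y \<le> pi/2")
    case True
    then have "0 \<le> cos y" using assms by (intro cos_ge_zero) auto
    moreover have "cos y \<le> cos x" using assms True by (intro cos_monotone_0_pi_le) auto
    ultimately show ?thesis by simp
  next
    case False
    then have "0 \<le> cos (pi - y)" using assms by (intro cos_ge_zero) auto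
    moreover have "cos (pi - y) \<le> cos x" using assms False by (intro cos_monotone_0_pi_le) auto
    ultimately show ?thesis by simp
  qed
  then show ?thesis by (metis abs_le_square_iff abs_of_nonneg abs_ge_zero order.trans)
qed

lemma power2_cos_add_int_pi: "(cos (x + of_int k * pi))\<^sup>2 = (cos x)\<^sup>2"
proof -
  have "sin (of_int k * pi) = 0" using sin_npi_int[of k] by (simp add: mult.commute)
  then show ?thesis
    using sin_cos_squared_add[of "of_int k * pi"] by (simp add: cos_add power_mult_distrib)
qed

lemma power2_cos_pair_dominated_base:
  fixes d s :: real
  assumes d: "0 \<le> d" "d \<le> pi/2" and s: "0 \<le> s" "s < pi"
  shows "\<exists>t\<in>{0..d}. (cos s)\<^sup>2 \<le> (cos t)\<^sup>2 \<and> (cos (s - d))\<^sup>2 \<le> (cos (t - d))\<^sup>2"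
proof -
  consider "s \<le> d" | "d < s" "s \<le> pi - d" | "pi - d < s" by linarith
  then show ?thesis
  proof cases
    case 1
    then show ?thesis using s by (intro bexI[of _ s]) auto
  next
    case 2
    then have "(cos s)\<^sup>2 \<le> (cos d)\<^sup>2" using d by (intro power2_cos_le_power2_cos) auto
    moreover have "(cos (s - d))\<^sup>2 \<le> (cos (d - d))\<^sup>2" by (simp add: abs_square_le_1)
    ultimately show ?thesis using d by (intro bexI[of _ d]) auto
  next
    case 3
    have "(cos (s - d))\<^sup>2 = (cos ((pi - s) + d))\<^sup>2"
    proof -
      have "s - d = pi - ((pi - s) + d)" by simp
      then show ?thesis by (metis cos_pi_minus power2_minus)
    qed
    also have "\<dots> \<le> (cos (d - (pi - s)))\<^sup>2"
      using 3 d s by (intro power2_cos_le_power2_cos) auto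
    also have "\<dots> = (cos ((pi - s) - d))\<^sup>2" by (metis cos_minus minus_diff_eq)
    finally show ?thesis using 3 s by (intro bexI[of _ "pi - s"]) auto
  qed
qed

lemma power2_cos_pair_dominated:
  fixes d s :: real
  assumes "0 \<le> d" "d \<le> pi/2"
  shows "\<exists>t\<in>{0..d}. (cos s)\<^sup>2 \<le> (cos t)\<^sup>2 \<and> (cos (s - d))\<^sup>2 \<le> (cos (t - d))\<^sup>2"
proof -
  define k where "k = \<lfloor>s / pi\<rfloor>"
  define s' where "s' = s - of_int k * pi"
  have "of_int k * pi \<le> s" "s < (of_int k + 1) * pi"
    unfolding k_def by (simp_all add: floor_divide_lower floor_divide_upper)
  then have "0 \<le> s'" "s' < pi" unfolding s'_def by (simp_all add: distrib_right)
  then obtain t where "t \<in> {0..d}" "(cos s')\<^sup>2 \<le> (cos t)\<^sup>2" "(cos (s' - d))\<^sup>2 \<le> (cos (t - d))\<^sup>2"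
    using power2_cos_pair_dominated_base[OF assms] by blast
  moreover have "(cos s)\<^sup>2 = (cos s')\<^sup>2" "(cos (s - d))\<^sup>2 = (cos (s' - d))\<^sup>2"
    using power2_cos_add_int_pi[of s' k] power2_cos_add_int_pi[of "s' - d" k]
    by (simp_all add: s'_def algebra_simps)
  ultimately show ?thesis by auto
qed

definition planar_dir :: "'a::real_vector \<Rightarrow> 'a \<Rightarrow> real \<Rightarrow> 'a" where
  "planar_dir u1 u2 t = cos t *\<^sub>R u1 + sin t *\<^sub>R u2"

lemma inner_planar_dir:
  fixes u1 u2 :: "'a::real_inner"
  assumes "u1 \<bullet> u1 = 1" "u2 \<bullet> u2 = 1" "u1 \<bullet> u2 = 0"
  shows "planar_dir u1 u2 s \<bullet> planar_dir u1 u2 t = cos (s - t)"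
  using assms by (simp add: planar_dir_def inner_add_left inner_add_right inner_commute cos_diff)

lemma inner_orthonormal_pair_le:
  fixes w u1 u2 :: "'a::real_inner"
  assumes u: "u1 \<bullet> u1 = 1" "u2 \<bullet> u2 = 1" "u1 \<bullet> u2 = 0"
  shows "(w \<bullet> u1)\<^sup>2 + (w \<bullet> u2)\<^sup>2 \<le> w \<bullet> w"
proof -
  define r where "r = w - (w \<bullet> u1) *\<^sub>R u1 - (w \<bullet> u2) *\<^sub>R u2"
  have "0 \<le> r \<bullet> r" by simp
  also have "r \<bullet> r = w \<bullet> w - (w \<bullet> u1)\<^sup>2 - (w \<bullet> u2)\<^sup>2"
    using u by (simp add: r_def inner_diff_left inner_diff_right inner_commute power2_eq_square
        algebra_simps)
  finally show ?thesis by simp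
qed

text \<open>Writing the projection of \<open>w\<close> onto the plane in polar coordinates \<open>r (cos t, sin t)\<close>
  gives \<open>w \<bullet> planar_dir u1 u2 s = r cos (t - s)\<close> with \<open>r\<^sup>2 \<le> w \<bullet> w\<close>.\<close>
lemma inner_planar_dir_le:
  fixes w u1 u2 :: "'a::real_inner"
  assumes u: "u1 \<bullet> u1 = 1" "u2 \<bullet> u2 = 1" "u1 \<bullet> u2 = 0"
  obtains t where "\<And>s. (w \<bullet> planar_dir u1 u2 s)\<^sup>2 \<le> (w \<bullet> w) * (cos (t - s))\<^sup>2"
proof -
  define z where "z = Complex (w \<bullet> u1) (w \<bullet> u2)"
  define r where "r = cmod z"
  define t where "t = Arg z"
  have polar: "w \<bullet> u1 = r * cos t" "w \<bullet> u2 = r * sin t"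
    using Re_rcis[of r t] Im_rcis[of r t] by (simp_all add: r_def t_def rcis_cmod_Arg z_def)
  have r_le: "r\<^sup>2 \<le> w \<bullet> w"
    using inner_orthonormal_pair_le[OF u, of w] cmod_power2[of z] by (simp add: r_def z_def)
  have "(w \<bullet> planar_dir u1 u2 s)\<^sup>2 \<le> (w \<bullet> w) * (cos (t - s))\<^sup>2" for s
  proof -
    have "w \<bullet> planar_dir u1 u2 s = r * cos (t - s)"
      by (simp add: planar_dir_def polar cos_diff algebra_simps)
    then have "(w \<bullet> planar_dir u1 u2 s)\<^sup>2 = r\<^sup>2 * (cos (t - s))\<^sup>2" by (simp add: power_mult_distrib)
    also have "\<dots> \<le> (w \<bullet> w) * (cos (t - s))\<^sup>2" using r_le by (simp add: mult_right_mono)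
    finally show ?thesis .
  qed
  then show ?thesis by (rule that)
qed

lemma diagm_mult_vec: "diagm b *v x = (\<chi> i. b $ i * x $ i)"
proof -
  have "(\<Sum>j\<in>UNIV. (if i = j then b $ i else 0) * x $ j) = b $ i * x $ i" for i
    by (simp add: if_distrib[of "\<lambda>a. a * _"] cong: if_cong)
  then show ?thesis by (simp add: vec_eq_iff diagm_def matrix_vector_mult_def)
qed

lemma inner_diagm_mult_vec: "h \<bullet> (diagm b *v x) = (diagm b *v h) \<bullet> x"
  by (simp add: diagm_mult_vec inner_vec_def algebra_simps)

lemma Amat_mult_vec:
  "Amat PS1 PS2 h01 h02 *v z = (PS1 * (h01 \<bullet> z)) *\<^sub>R h01 + (PS2 * (h02 \<bullet> z)) *\<^sub>R h02"
  unfolding Amat_def outer_def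
  by (simp add: vec_eq_iff matrix_vector_mult_def inner_vec_def sum_distrib_left sum_distrib_right
      sum.distrib algebra_simps)

lemma Rout1_eq_mac_region:
  assumes "w = diagm b *v h1"
  shows "Rout1 PS1 PS2 h01 h02 h1 b
           = mac_region (PS1 * (w \<bullet> h01)\<^sup>2 / (w \<bullet> w)) (PS2 * (w \<bullet> h02)\<^sup>2 / (w \<bullet> w))"
proof -
  have "h1 \<bullet> (diagm b *v x) = w \<bullet> x" for x using assms inner_diagm_mult_vec by metis
  moreover have "w \<bullet> (Amat PS1 PS2 h01 h02 *v w) = PS1 * (w \<bullet> h01)\<^sup>2 + PS2 * (w \<bullet> h02)\<^sup>2"
    by (simp add: Amat_mult_vec inner_commute power2_eq_square algebra_simps)
  ultimately show ?thesis
    by (simp add: Rout1_def mac_region_def Let_def add_divide_distrib ac_simps assms[symmetric])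
qed

lemma feasible_gains_exist:
  fixes h1 w :: "real ^ 'n"
  assumes PS: "0 \<le> PS1" "0 \<le> PS2" and h1: "\<forall>k. h1 $ k > 0" and PUp: "\<forall>k. PUp $ k > 0"
  obtains b \<tau> where "feasible PS1 PS2 h01 h02 PUp b" "\<tau> > 0" "diagm b *v h1 = \<tau> *\<^sub>R w"
proof -
  define bU where "bU = betaUp PS1 PS2 h01 h02 PUp"
  have bU_pos: "bU k > 0" for k
    using PS PUp by (simp add: bU_def betaUp_def add_pos_nonneg)
  define f where "f k = bU k * h1 $ k / (\<bar>w $ k\<bar> + 1)" for k
  define \<tau> where "\<tau> = Min (range f)"
  have "f k > 0" for k using bU_pos h1 by (simp add: f_def add_pos_nonneg)
  then have \<tau>_pos: "\<tau> > 0" by (simp add: \<tau>_def)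
  have \<tau>_le: "\<tau> \<le> f k" for k by (simp add: \<tau>_def)
  define b where "b = (\<chi> k. \<tau> * w $ k / h1 $ k)"
  have "\<bar>b $ k\<bar> \<le> bU k" for k
  proof -
    have hk: "h1 $ k > 0" using h1 by simp
    have "\<bar>b $ k\<bar> = \<tau> * \<bar>w $ k\<bar> / h1 $ k" using hk \<tau>_pos by (simp add: b_def abs_mult)
    also have "\<dots> \<le> f k * \<bar>w $ k\<bar> / h1 $ k"
      using \<tau>_le[of k] hk by (intro divide_right_mono mult_right_mono) auto
    also have "\<dots> = bU k * (\<bar>w $ k\<bar> / (\<bar>w $ k\<bar> + 1))" using hk by (simp add: f_def)
    also have "\<dots> \<le> bU k" using bU_pos[of k] by (intro mult_left_le) auto
    finally show ?thesis .
  qed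
  then have "feasible PS1 PS2 h01 h02 PUp b" by (simp add: feasible_def bU_def)
  moreover have "diagm b *v h1 = \<tau> *\<^sub>R w"
    using h1 by (simp add: diagm_mult_vec b_def vec_eq_iff less_imp_neq[symmetric])
  ultimately show ?thesis using \<tau>_pos that by blast
qed

lemma Rout1_subset_Rtheta:
  fixes u1 u2 :: "real ^ 'n"
  assumes PS: "0 \<le> PS1" "0 \<le> PS2"
    and u: "u1 \<bullet> u1 = 1" "u2 \<bullet> u2 = 1" "u1 \<bullet> u2 = 0"
    and ab: "\<alpha> \<le> \<beta>" "\<beta> - \<alpha> \<le> pi/2"
    and h01: "h01 = N1 *\<^sub>R planar_dir u1 u2 \<alpha>" and h02: "h02 = N2 *\<^sub>R planar_dir u1 u2 \<beta>"
    and b: "diagm b *v h1 \<noteq> 0"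
  obtains \<theta> where "\<theta> \<in> {\<alpha>..\<beta>}"
    "Rout1 PS1 PS2 h01 h02 h1 b \<subseteq> Rtheta (N1\<^sup>2 * PS1) (N2\<^sup>2 * PS2) \<alpha> \<beta> \<theta>"
proof -
  define w where "w = diagm b *v h1"
  obtain t where t: "\<And>s. (w \<bullet> planar_dir u1 u2 s)\<^sup>2 \<le> (w \<bullet> w) * (cos (t - s))\<^sup>2"
    using inner_planar_dir_le[OF u] by blast
  obtain t' where t': "t' \<in> {0..\<beta> - \<alpha>}" "(cos (t - \<alpha>))\<^sup>2 \<le> (cos t')\<^sup>2"
      "(cos (t - \<alpha> - (\<beta> - \<alpha>)))\<^sup>2 \<le> (cos (t' - (\<beta> - \<alpha>)))\<^sup>2"
    using power2_cos_pair_dominated[of "\<beta> - \<alpha>" "t - \<alpha>"] ab by auto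
  define \<theta> where "\<theta> = \<alpha> + t'"
  have ww: "w \<bullet> w > 0" using b by (simp add: w_def)
  have snr_le: "P * (w \<bullet> (N *\<^sub>R planar_dir u1 u2 s))\<^sup>2 / (w \<bullet> w) \<le> N\<^sup>2 * P * (cos (\<theta> - s))\<^sup>2"
    if "0 \<le> P" "(cos (t - s))\<^sup>2 \<le> (cos (\<theta> - s))\<^sup>2" for P N s
  proof -
    have "(w \<bullet> planar_dir u1 u2 s)\<^sup>2 \<le> (w \<bullet> w) * (cos (\<theta> - s))\<^sup>2"
      using t[of s] that ww by (meson mult_left_mono less_imp_le order_trans)
    then have "(w \<bullet> planar_dir u1 u2 s)\<^sup>2 / (w \<bullet> w) \<le> (cos (\<theta> - s))\<^sup>2"
      using ww by (simp add: divide_le_eq mult.commute)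
    then have "N\<^sup>2 * P * ((w \<bullet> planar_dir u1 u2 s)\<^sup>2 / (w \<bullet> w)) \<le> N\<^sup>2 * P * (cos (\<theta> - s))\<^sup>2"
      using that by (intro mult_left_mono) auto
    then show ?thesis by (simp add: power_mult_distrib ac_simps)
  qed
  have "Rout1 PS1 PS2 h01 h02 h1 b
          = mac_region (PS1 * (w \<bullet> h01)\<^sup>2 / (w \<bullet> w)) (PS2 * (w \<bullet> h02)\<^sup>2 / (w \<bullet> w))"
    by (rule Rout1_eq_mac_region[OF w_def])
  also have "\<dots> \<subseteq> Rtheta (N1\<^sup>2 * PS1) (N2\<^sup>2 * PS2) \<alpha> \<beta> \<theta>"
    unfolding Rtheta_eq_mac_region h01 h02 using PS ww t'
    by (intro mac_region_mono snr_le) (simp_all add: \<theta>_def algebra_simps)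
  finally have "Rout1 PS1 PS2 h01 h02 h1 b \<subseteq> Rtheta (N1\<^sup>2 * PS1) (N2\<^sup>2 * PS2) \<alpha> \<beta> \<theta>" .
  moreover have "\<theta> \<in> {\<alpha>..\<beta>}" using t'(1) by (simp add: \<theta>_def)
  ultimately show ?thesis using that by blast
qed

lemma Rtheta_eq_Rout1:
  fixes u1 u2 :: "real ^ 'n"
  assumes PS: "0 \<le> PS1" "0 \<le> PS2" and h1: "\<forall>k. h1 $ k > 0" and PUp: "\<forall>k. PUp $ k > 0"
    and u: "u1 \<bullet> u1 = 1" "u2 \<bullet> u2 = 1" "u1 \<bullet> u2 = 0"
    and h01: "h01 = N1 *\<^sub>R planar_dir u1 u2 \<alpha>" and h02: "h02 = N2 *\<^sub>R planar_dir u1 u2 \<beta>"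
  obtains b where "feasible PS1 PS2 h01 h02 PUp b" "diagm b *v h1 \<noteq> 0"
    "Rout1 PS1 PS2 h01 h02 h1 b = Rtheta (N1\<^sup>2 * PS1) (N2\<^sup>2 * PS2) \<alpha> \<beta> \<theta>"
proof -
  define w where "w = planar_dir u1 u2 \<theta>"
  obtain b \<tau> where b: "feasible PS1 PS2 h01 h02 PUp b" "\<tau> > 0" "diagm b *v h1 = \<tau> *\<^sub>R w"
    using feasible_gains_exist[OF PS h1 PUp] by blast
  have w: "w \<bullet> w = 1" "w \<bullet> h01 = N1 * cos (\<theta> - \<alpha>)" "w \<bullet> h02 = N2 * cos (\<theta> - \<beta>)"
    using inner_planar_dir[OF u] by (simp_all add: w_def h01 h02)
  then have "diagm b *v h1 \<noteq> 0" using b by auto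
  moreover have "Rout1 PS1 PS2 h01 h02 h1 b = Rtheta (N1\<^sup>2 * PS1) (N2\<^sup>2 * PS2) \<alpha> \<beta> \<theta>"
    using b(2) by (simp add: Rout1_eq_mac_region[OF b(3)[symmetric]] Rtheta_eq_mac_region w
        power_mult_distrib power2_eq_square ac_simps)
  ultimately show ?thesis using b(1) that by blast
qed

lemma UN_Rout1_eq_UN_Rtheta:
  fixes u1 u2 :: "real ^ 'n"
  assumes PS: "0 \<le> PS1" "0 \<le> PS2" and h1: "\<forall>k. h1 $ k > 0" and PUp: "\<forall>k. PUp $ k > 0"
    and u: "u1 \<bullet> u1 = 1" "u2 \<bullet> u2 = 1" "u1 \<bullet> u2 = 0"
    and ab: "\<alpha> \<le> \<beta>" "\<beta> - \<alpha> \<le> pi/2"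
    and h01: "h01 = N1 *\<^sub>R planar_dir u1 u2 \<alpha>" and h02: "h02 = N2 *\<^sub>R planar_dir u1 u2 \<beta>"
  shows "(\<Union>b \<in> {b. feasible PS1 PS2 h01 h02 PUp b \<and> diagm b *v h1 \<noteq> 0}. Rout1 PS1 PS2 h01 h02 h1 b)
           = (\<Union>\<theta> \<in> {\<alpha>..\<beta>}. Rtheta (N1\<^sup>2 * PS1) (N2\<^sup>2 * PS2) \<alpha> \<beta> \<theta>)"
proof (intro subset_antisym UN_least)
  fix b assume "b \<in> {b. feasible PS1 PS2 h01 h02 PUp b \<and> diagm b *v h1 \<noteq> 0}"
  then obtain \<theta> where "\<theta> \<in> {\<alpha>..\<beta>}"
    "Rout1 PS1 PS2 h01 h02 h1 b \<subseteq> Rtheta (N1\<^sup>2 * PS1) (N2\<^sup>2 * PS2) \<alpha> \<beta> \<theta>"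
    using Rout1_subset_Rtheta[OF PS u ab h01 h02] by blast
  then show "Rout1 PS1 PS2 h01 h02 h1 b \<subseteq> (\<Union>\<theta> \<in> {\<alpha>..\<beta>}. Rtheta (N1\<^sup>2 * PS1) (N2\<^sup>2 * PS2) \<alpha> \<beta> \<theta>)"
    by blast
next
  fix \<theta>
  obtain b where "feasible PS1 PS2 h01 h02 PUp b" "diagm b *v h1 \<noteq> 0"
    "Rout1 PS1 PS2 h01 h02 h1 b = Rtheta (N1\<^sup>2 * PS1) (N2\<^sup>2 * PS2) \<alpha> \<beta> \<theta>"
    using Rtheta_eq_Rout1[OF PS h1 PUp u h01 h02] by blast
  then show "Rtheta (N1\<^sup>2 * PS1) (N2\<^sup>2 * PS2) \<alpha> \<beta> \<theta>
      \<subseteq> (\<Union>b \<in> {b. feasible PS1 PS2 h01 h02 PUp b \<and> diagm b *v h1 \<noteq> 0}. Rout1 PS1 PS2 h01 h02 h1 b)"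
    by blast
qed

lemma convex_UN_Rtheta:
  assumes P: "0 \<le> P1" "0 \<le> P2" and ab: "\<beta> - \<alpha> \<le> pi/4"
  shows "convex (\<Union>\<theta> \<in> {\<alpha>..\<beta>}. Rtheta P1 P2 \<alpha> \<beta> \<theta>)"
proof (rule convexI)
  fix x y and u v :: real
  assume "x \<in> (\<Union>\<theta> \<in> {\<alpha>..\<beta>}. Rtheta P1 P2 \<alpha> \<beta> \<theta>)" "y \<in> (\<Union>\<theta> \<in> {\<alpha>..\<beta>}. Rtheta P1 P2 \<alpha> \<beta> \<theta>)"
    and uv: "0 \<le> u" "0 \<le> v" "u + v = 1"
  then obtain \<theta>1 \<theta>2 where \<theta>: "\<theta>1 \<in> {\<alpha>..\<beta>}" "\<theta>2 \<in> {\<alpha>..\<beta>}"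
    and xy: "x \<in> Rtheta P1 P2 \<alpha> \<beta> \<theta>1" "y \<in> Rtheta P1 P2 \<alpha> \<beta> \<theta>2"
    by blast
  define \<theta> where "\<theta> = u * \<theta>1 + v * \<theta>2"
  have "\<theta> \<in> {\<alpha>..\<beta>}"
    using convexD[OF convex_real_interval(5) \<theta> uv] by (simp add: \<theta>_def)
  have snr_concave: "u * (P * (cos (\<theta>1 - c))\<^sup>2) + v * (P * (cos (\<theta>2 - c))\<^sup>2) \<le> P * (cos (\<theta> - c))\<^sup>2"
    if "0 \<le> P" "c \<in> {\<alpha>, \<beta>}" for P c
  proof -
    have "u * (\<theta>1 - c) + v * (\<theta>2 - c) = \<theta> - (u + v) * c" by (simp add: \<theta>_def algebra_simps)
    then have "\<theta> - c = u * (\<theta>1 - c) + v * (\<theta>2 - c)" using uv by simp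
    moreover have "\<theta>1 - c \<in> {-(pi/4)..pi/4}" "\<theta>2 - c \<in> {-(pi/4)..pi/4}" using \<theta> ab that by auto
    ultimately have "u * (cos (\<theta>1 - c))\<^sup>2 + v * (cos (\<theta>2 - c))\<^sup>2 \<le> (cos (\<theta> - c))\<^sup>2"
      using concave_onD[OF concave_on_power2_cos, of v "\<theta>1 - c" "\<theta>2 - c"] uv
      by (simp add: eq_diff_eq[symmetric])
    then have "P * (u * (cos (\<theta>1 - c))\<^sup>2 + v * (cos (\<theta>2 - c))\<^sup>2) \<le> P * (cos (\<theta> - c))\<^sup>2"
      using that(1) by (rule mult_left_mono)
    then show ?thesis by (simp add: algebra_simps)
  qed
  have "u *\<^sub>R x + v *\<^sub>R y \<in> Rtheta P1 P2 \<alpha> \<beta> \<theta>"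
    using xy unfolding Rtheta_eq_mac_region
    by (rule mac_region_convex_combination) (use P uv snr_concave in auto)
  with \<open>\<theta> \<in> {\<alpha>..\<beta>}\<close> show "u *\<^sub>R x + v *\<^sub>R y \<in> (\<Union>\<theta> \<in> {\<alpha>..\<beta>}. Rtheta P1 P2 \<alpha> \<beta> \<theta>)" by blast
qed

theorem theorem5:
  fixes PS1 PS2 :: real and h01 h02 h1 PUp u1 u2 :: "real ^ 'n" and \<alpha> \<beta> :: real
  assumes PS1: "PS1 > 0" and PS2: "PS2 > 0"
    and h01: "\<forall>k. h01 $ k > 0" and h02: "\<forall>k. h02 $ k > 0" and h1: "\<forall>k. h1 $ k > 0"
    and PUp: "\<forall>k. PUp $ k > 0"
    and u1: "norm u1 = 1" and u2: "norm u2 = 1" and u12: "u1 \<bullet> u2 = 0"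
    and ab: "0 \<le> \<alpha>" "\<alpha> \<le> \<beta>" "\<beta> \<le> pi / 2"
    and d1: "h01 /\<^sub>R norm h01 = cos \<alpha> *\<^sub>R u1 + sin \<alpha> *\<^sub>R u2"
    and d2: "h02 /\<^sub>R norm h02 = cos \<beta> *\<^sub>R u1 + sin \<beta> *\<^sub>R u2"
  shows "(\<Union>b \<in> {b. feasible PS1 PS2 h01 h02 PUp b \<and> diagm b *v h1 \<noteq> 0}.
            Rout1 PS1 PS2 h01 h02 h1 b)
         = (\<Union>\<theta> \<in> {\<alpha>..\<beta>}. Rtheta ((norm h01)\<^sup>2 * PS1) ((norm h02)\<^sup>2 * PS2) \<alpha> \<beta> \<theta>)
       \<and> (arccos ((h01 /\<^sub>R norm h01) \<bullet> (h02 /\<^sub>R norm h02)) \<le> pi / 4 \<longrightarrow>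
          convex (\<Union>\<theta> \<in> {\<alpha>..\<beta>}. Rtheta ((norm h01)\<^sup>2 * PS1) ((norm h02)\<^sup>2 * PS2) \<alpha> \<beta> \<theta>))"
proof -
  have u: "u1 \<bullet> u1 = 1" "u2 \<bullet> u2 = 1" "u1 \<bullet> u2 = 0" using u1 u2 u12 by (simp_all add: norm_eq_1)
  have "h01 \<noteq> 0" "h02 \<noteq> 0" using h01 h02 by (metis less_irrefl zero_index)+
  then have h0: "h01 = norm h01 *\<^sub>R planar_dir u1 u2 \<alpha>" "h02 = norm h02 *\<^sub>R planar_dir u1 u2 \<beta>"
    by (simp_all flip: d1 d2 add: planar_dir_def)
  have PS: "0 \<le> PS1" "0 \<le> PS2" and dab: "\<alpha> \<le> \<beta>" "\<beta> - \<alpha> \<le> pi/2" using PS1 PS2 ab by auto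
  have "(h01 /\<^sub>R norm h01) \<bullet> (h02 /\<^sub>R norm h02) = cos (\<beta> - \<alpha>)"
    using inner_planar_dir[OF u, of \<alpha> \<beta>] cos_minus[of "\<beta> - \<alpha>"] by (simp add: d1 d2 planar_dir_def)
  moreover have "arccos (cos (\<beta> - \<alpha>)) = \<beta> - \<alpha>" using ab by (intro arccos_cos) auto
  ultimately show ?thesis
    using UN_Rout1_eq_UN_Rtheta[OF PS h1 PUp u dab h0] PS
    by (auto intro!: convex_UN_Rtheta)
qed

end
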